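(* Let $r \in C$. For any generator $v(x\,;\,c) \in V$ (with $x\in\overline{\mathbb D_1}$, $c\in\mathbb C$), \[ T_r v(x\,;\,c) \;=\; v\big( f_r(x)\,;\,\ell_r(x) \big) \,-\, v\big( f_r(0)\,;\,\ell_r(0) \big), \] where each coordinate of the left-hand side is given by an absolutely convergent series. Therefore, we can define the linear operator $T_r: V \to V$ via coordinatewise matrix–vector multiplication.
   Context: $C$ is a finite index set. For each $r\in C$, $B_r=\begin{pmatrix} a_r & b_r\\ c_r& d_r\end{pmatrix}$ is an invertible $2\times 2$ real matrix with all entries strictly positive. Set \[ \begin{pmatrix} \alpha_r & \beta_r \\ \gamma_r & \delta_r \end{pmatrix}=\frac12\begin{pmatrix} a_r-b_r-c_r+d_r & a_r+b_r-c_r-d_r\\ a_r-b_r+c_r-d_r & a_r+b_r+c_r+d_r\end{pmatrix}, \qquad f_r(x)=\frac{\alpha_r x+\beta_r}{\gamma_r x+\delta_r}, \] so $f_r$ is a real Möbius transformation and there is $0<\rho<1$ with $f_r([-1,1])\subset[-\rho,\rho]$ for all $r\in C$; $f_r'$ is its usual derivative. For a Möbius map $g(x)=\frac{ax+b}{cx+d}$ its "transpose" is $g^\top(x)=\frac{ax+c}{bx+d}$; here $f_r^\top([-1,1])\subset(-1,1)$, $\delta_r>0$ and $|f_r^\top(0)|=|\gamma_r/\delta_r|<1$. Define $\ell_r(x)=\mathrm{Log}(\gamma_r x+\delta_r)$ (principal branch, $\mathrm{Log}(1)=0$), holomorphic on a neighborhood of $\overline{\mathbb D_1}$, where $\mathbb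 D_t=\{z\in\mathbb C:|z|<t\}$. For $x\in\overline{\mathbb D_1}$ and $c\in\mathbb C$, $v(x\,;\,c)\in\ell^\infty(\mathbb N_0)$ is the sequence with $(v(x;c))_0=c$ and $(v(x;c))_n=-\frac{(-x)^n}{n}$ for $n\ge1$; $V$ is the complex linear span of all such $v(x\,;\,c)$. $T_r=(b^{(r)}_{k,n})_{k,n\in\mathbb N_0}$ is the infinite matrix with $b^{(r)}_{k,0}=0$ for $k\ge0$, $b^{(r)}_{0,n}=(f_r^\top(0))^n$ for $n\ge1$, and for $k,n\ge1$, \[ b^{(r)}_{k,n}=\sum_{\ell=1}^{\min\{k,n\}}\binom{n}{\ell}\binom{k-1}{\ell-1}(f_r^\top(0))^{n-\ell}(-f_r(0))^{k-\ell}(f_r'(0))^{\ell}, \] acting on sequences by coordinatewise matrix–vector multiplication. *)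

theory Defs
  imports "HOL-Analysis.Analysis"
begin

definition mob :: "real \<Rightarrow> real \<Rightarrow> real \<Rightarrow> real \<Rightarrow> complex \<Rightarrow> complex" where
  "mob a b c d x = (of_real a * x + of_real b) / (of_real c * x + of_real d)"

definition mobT :: "real \<Rightarrow> real \<Rightarrow> real \<Rightarrow> real \<Rightarrow> complex \<Rightarrow> complex" where
  "mobT a b c d x = mob a c b d x"

definition alph :: "real \<Rightarrow> real \<Rightarrow> real \<Rightarrow> real \<Rightarrow> real" where
  "alph a b c d = (a - b - c + d) / 2"
definition bet :: "real \<Rightarrow> real \<Rightarrow> real \<Rightarrow> real \<Rightarrow> real" where
  "bet a b c d = (a + b - c - d) / 2"
definition gam :: "real \<Rightarrow> real \<Rightarrow> real \<Rightarrow> real \<Rightarrow> real" where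
  "gam a b c d = (a - b + c - d) / 2"
definition delt :: "real \<Rightarrow> real \<Rightarrow> real \<Rightarrow> real \<Rightarrow> real" where
  "delt a b c d = (a + b + c + d) / 2"

definition fr :: "real \<Rightarrow> real \<Rightarrow> real \<Rightarrow> real \<Rightarrow> complex \<Rightarrow> complex" where
  "fr a b c d = mob (alph a b c d) (bet a b c d) (gam a b c d) (delt a b c d)"

definition frT :: "real \<Rightarrow> real \<Rightarrow> real \<Rightarrow> real \<Rightarrow> complex \<Rightarrow> complex" where
  "frT a b c d = mobT (alph a b c d) (bet a b c d) (gam a b c d) (delt a b c d)"

definition lr :: "real \<Rightarrow> real \<Rightarrow> real \<Rightarrow> real \<Rightarrow> complex \<Rightarrow> complex" where
  "lr a b c d x = Ln (of_real (gam a b c d) * x + of_real (delt a b c d))"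

definition vseq :: "complex \<Rightarrow> complex \<Rightarrow> nat \<Rightarrow> complex" where
  "vseq x c n = (if n = 0 then c else - ((- x) ^ n) / of_nat n)"

definition Tent :: "real \<Rightarrow> real \<Rightarrow> real \<Rightarrow> real \<Rightarrow> nat \<Rightarrow> nat \<Rightarrow> complex" where
  "Tent a b c d k n =
     (if n = 0 then 0
      else if k = 0 then (frT a b c d 0) ^ n
      else (\<Sum>l = 1..min k n. of_nat (n choose l) * of_nat ((k - 1) choose (l - 1))
              * (frT a b c d 0) ^ (n - l) * (- fr a b c d 0) ^ (k - l)
              * (deriv (fr a b c d) 0) ^ l))"

end

theory Submission
  imports Defs
begin

text \<open>Write p = f(0), q = f^T(0) = gamma/delta and s = f'(0). A real Moebius map satisfies
  f(x) = p + s x / (1 + q x), and ell(x) = ell(0) + Log(1 + q x); since |q x| < 1 all series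
  below converge absolutely. Row 0 of T applied to v(x; c) is the logarithm series of
  Log(1 + q x). For k > 0, exchanging the finite sum over l with the series over n leaves for
  each l the series sum_n C(n,l) q^(n-l) (-(-x)^n / n) = -(-x)^l / (l (1 + q x)^l), a negative
  binomial series; as C(k-1,l-1)/l = C(k,l)/k, the binomial theorem then sums the finite sum
  to -(-f(x))^k/k + (-p)^k/k.\<close>

lemma sum_choose_power_convolution:
  fixes y :: "'a::comm_semiring_1"
  shows "(\<Sum>i\<le>k. of_nat ((j + i) choose j) * y ^ i * y ^ (k - i))
           = of_nat ((Suc j + k) choose Suc j) * y ^ k"
proof -
  have "(\<Sum>i\<le>k. of_nat ((j + i) choose j) * y ^ i * y ^ (k - i))
          = of_nat (\<Sum>i\<le>k. (j + i) choose j) * y ^ k"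
    by (simp add: sum_distrib_right mult.assoc power_add[symmetric])
  then show ?thesis by (simp add: choose_rising_sum(1))
qed

lemma negative_binomial_series:
  fixes y :: "'a::{real_normed_field,banach}"
  assumes "norm y < 1"
  shows "summable (\<lambda>m. norm (of_nat ((j + m) choose j) * y ^ m))
       \<and> (\<lambda>m. of_nat ((j + m) choose j) * y ^ m) sums (1 / (1 - y) ^ Suc j)"
proof (induction j)
  case 0
  show ?case
    using assms geometric_sums[of y] by (simp add: norm_power summable_geometric)
next
  case (Suc j)
  define a where "a = (\<lambda>m. of_nat ((j + m) choose j) * y ^ m)"
  have a: "summable (\<lambda>m. norm (a m))" "a sums (1 / (1 - y) ^ Suc j)"
    using Suc.IH unfolding a_def by blast+
  have b: "summable (\<lambda>m. norm (y ^ m))" "(\<lambda>m. y ^ m) sums (1 / (1 - y))"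
    using assms geometric_sums[of y] by (simp_all add: norm_power summable_geometric)
  have conv: "(\<Sum>i\<le>k. a i * y ^ (k - i)) = of_nat ((Suc j + k) choose Suc j) * y ^ k"
    and norm_conv: "(\<Sum>i\<le>k. norm (a i) * norm (y ^ (k - i)))
                      = norm (of_nat ((Suc j + k) choose Suc j) * y ^ k)" for k
    using sum_choose_power_convolution[where y = y] sum_choose_power_convolution[where y = "norm y"]
    by (simp_all add: a_def norm_mult norm_power mult.assoc del: binomial_Suc_Suc)
  have "(\<lambda>k. norm (of_nat ((Suc j + k) choose Suc j) * y ^ k))
          sums ((\<Sum>m. norm (a m)) * (\<Sum>m. norm (y ^ m)))"
    using Cauchy_product_sums[of "\<lambda>m. norm (a m)" "\<lambda>m. norm (y ^ m)"] a(1) b(1)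
    by (simp add: norm_conv)
  moreover have "(\<lambda>k. of_nat ((Suc j + k) choose Suc j) * y ^ k)
                   sums (1 / (1 - y) ^ Suc j * (1 / (1 - y)))"
    using Cauchy_product_sums[OF a(1) b(1)] a(2) b(2) by (simp add: conv sums_iff)
  ultimately show ?case
    by (auto simp: sums_iff field_simps)
qed

lemma vseq_binomial_tail_shift:
  fixes q x z :: complex
  shows "of_nat ((m + Suc j) choose Suc j) * q ^ m * vseq x z (m + Suc j)
           = vseq x z (Suc j) * (of_nat ((j + m) choose j) * (- (q * x)) ^ m)"
proof -
  define C where "C = (of_nat ((m + Suc j) choose Suc j) :: complex)"
  define B where "B = (of_nat ((j + m) choose j) :: complex)"
  have "Suc j * ((m + Suc j) choose Suc j) = (m + Suc j) * ((j + m) choose j)"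
    using times_binomial_minus1_eq[of "Suc j" "m + Suc j"] by (simp add: add_ac)
  then have "of_nat (Suc j) * C = of_nat (m + Suc j) * B"
    unfolding B_def C_def by (metis of_nat_mult)
  then have ratio: "C / of_nat (m + Suc j) = B / of_nat (Suc j)"
    by (simp add: field_simps del: of_nat_Suc)
  have "C * q ^ m * vseq x z (m + Suc j)
          = C / of_nat (m + Suc j) * (- ((- x) ^ Suc j) * (q ^ m * (- x) ^ m))"
    by (simp add: vseq_def power_add del: of_nat_Suc)
  also have "\<dots> = B / of_nat (Suc j) * (- ((- x) ^ Suc j) * (q ^ m * (- x) ^ m))"
    unfolding ratio ..
  also have "\<dots> = vseq x z (Suc j) * (B * (- (q * x)) ^ m)"
    by (simp add: vseq_def del: of_nat_Suc flip: power_mult_distrib)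
  finally show ?thesis
    unfolding B_def C_def .
qed

lemma vseq_binomial_tail_sums:
  fixes q x z :: complex
  assumes qx: "norm (q * x) < 1" and "0 < l"
  shows "summable (\<lambda>n. norm (of_nat (n choose l) * q ^ (n - l) * vseq x z n))"
    and "(\<lambda>n. of_nat (n choose l) * q ^ (n - l) * vseq x z n)
           sums (vseq x z l / (1 + q * x) ^ l)"
proof -
  obtain j where l: "l = Suc j" using \<open>0 < l\<close> gr0_implies_Suc by blast
  define t where "t = (\<lambda>n. of_nat (n choose l) * q ^ (n - l) * vseq x z n)"
  have shift: "t (m + l) = vseq x z l * (of_nat ((j + m) choose j) * (- (q * x)) ^ m)" for m
    unfolding t_def l add_diff_cancel_right' by (rule vseq_binomial_tail_shift)
  have series: "summable (\<lambda>m. norm (of_nat ((j + m) choose j) * (- (q * x)) ^ m))"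
    "(\<lambda>m. of_nat ((j + m) choose j) * (- (q * x)) ^ m) sums (1 / (1 + q * x) ^ l)"
    using negative_binomial_series[of "- (q * x)" j] qx l by auto
  have "summable (\<lambda>m. norm (t (m + l)))"
    unfolding shift norm_mult[of "vseq x z l"] by (intro summable_mult series(1))
  then show "summable (\<lambda>n. norm (t n))"
    using summable_iff_shift[where f = "\<lambda>n. norm (t n)"] by blast
  have "(\<lambda>m. t (m + l)) sums (vseq x z l * (1 / (1 + q * x) ^ l))"
    unfolding shift by (intro sums_mult series(2))
  moreover have "(\<Sum>n<l. t n) = 0"
    by (simp add: t_def binomial_eq_0)
  ultimately show "t sums (vseq x z l / (1 + q * x) ^ l)"
    by (simp add: sums_iff_shift)
qed

lemma sum_pred_choose_power_div:
  fixes a b :: "'a::field_char_0"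
  assumes "0 < k"
  shows "(\<Sum>l = 1..k. of_nat ((k - 1) choose (l - 1)) / of_nat l * a ^ (k - l) * b ^ l)
           = ((a + b) ^ k - a ^ k) / of_nat k"
proof -
  have coeff: "of_nat ((k - 1) choose (l - 1)) / of_nat l = (of_nat (k choose l) / of_nat k :: 'a)"
    if "l \<in> {1..k}" for l
  proof -
    have "of_nat l * of_nat (k choose l) = (of_nat k * of_nat ((k - 1) choose (l - 1)) :: 'a)"
      using times_binomial_minus1_eq[of l k] that
      by (metis atLeastAtMost_iff of_nat_mult less_eq_Suc_le One_nat_def)
    then show ?thesis
      using that assms by (simp add: field_simps)
  qed
  have "(a + b) ^ k = (\<Sum>l\<le>k. of_nat (k choose l) * b ^ l * a ^ (k - l))"
    by (subst add.commute) (rule binomial_ring)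
  also have "\<dots> = a ^ k + (\<Sum>l = 1..k. of_nat (k choose l) * b ^ l * a ^ (k - l))"
    by (simp add: atMost_atLeast0 sum.atLeast_Suc_atMost)
  finally have "((a + b) ^ k - a ^ k) / of_nat k
                  = (\<Sum>l = 1..k. of_nat (k choose l) / of_nat k * a ^ (k - l) * b ^ l)"
    by (simp add: sum_divide_distrib mult_ac)
  also have "\<dots> = (\<Sum>l = 1..k. of_nat ((k - 1) choose (l - 1)) / of_nat l
                        * a ^ (k - l) * b ^ l)"
    by (intro sum.cong refl) (simp only: coeff)
  finally show ?thesis ..
qed

definition transfer_entry ::
    "complex \<Rightarrow> complex \<Rightarrow> complex \<Rightarrow> nat \<Rightarrow> nat \<Rightarrow> complex" where
  "transfer_entry p q s k n =
     (if n = 0 then 0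
      else if k = 0 then q ^ n
      else (\<Sum>l = 1..min k n. of_nat (n choose l) * of_nat ((k - 1) choose (l - 1))
              * q ^ (n - l) * (- p) ^ (k - l) * s ^ l))"

lemma Tent_eq_transfer_entry:
  "Tent a b c d = transfer_entry (fr a b c d 0) (frT a b c d 0) (deriv (fr a b c d) 0)"
  by (simp add: fun_eq_iff Tent_def transfer_entry_def)

lemma transfer_entry_vseq_eq_sum:
  assumes "0 < k"
  shows "transfer_entry p q s k n * vseq x z n
           = (\<Sum>l = 1..k. of_nat ((k - 1) choose (l - 1)) * (- p) ^ (k - l) * s ^ l
                 * (of_nat (n choose l) * q ^ (n - l) * vseq x z n))"
proof (cases "n = 0")
  case True
  then show ?thesis
    by (simp add: transfer_entry_def binomial_eq_0)
next
  case False
  have entry: "transfer_entry p q s k n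
          = (\<Sum>l = 1..k. of_nat (n choose l) * of_nat ((k - 1) choose (l - 1))
                * q ^ (n - l) * (- p) ^ (k - l) * s ^ l)"
    unfolding transfer_entry_def using assms False
    by (auto intro!: sum.mono_neutral_left simp: binomial_eq_0)
  show ?thesis
    unfolding entry sum_distrib_right by (simp add: mult_ac)
qed

lemma transfer_entry_vseq_sums:
  fixes p q s x z c c0 :: complex
  assumes qx: "norm (q * x) < 1" and "0 < k"
  shows "summable (\<lambda>n. norm (transfer_entry p q s k n * vseq x z n))"
    and "(\<lambda>n. transfer_entry p q s k n * vseq x z n)
           sums (vseq (p + s * x / (1 + q * x)) c k - vseq p c0 k)"
proof -
  define coeff where "coeff l = of_nat ((k - 1) choose (l - 1)) * (- p) ^ (k - l) * s ^ l" for l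
  define t where "t l n = of_nat (n choose l) * q ^ (n - l) * vseq x z n" for l n
  have expand: "transfer_entry p q s k n * vseq x z n = (\<Sum>l = 1..k. coeff l * t l n)" for n
    unfolding coeff_def t_def using \<open>0 < k\<close> by (rule transfer_entry_vseq_eq_sum)
  have tail: "summable (\<lambda>n. norm (t l n))" "t l sums (vseq x z l / (1 + q * x) ^ l)"
    if "l \<in> {1..k}" for l
    using vseq_binomial_tail_sums[OF qx, of l] that unfolding t_def by auto
  have "summable (\<lambda>n. \<Sum>l = 1..k. norm (coeff l) * norm (t l n))"
    using tail(1) by (intro summable_sum summable_mult) auto
  then show "summable (\<lambda>n. norm (transfer_entry p q s k n * vseq x z n))"
    unfolding expand
    by (rule summable_comparison_test') (auto intro: order_trans[OF norm_sum] simp: norm_mult)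
  define w where "w = - (s * x / (1 + q * x))"
  have w_power: "w ^ l = s ^ l * (- x) ^ l / (1 + q * x) ^ l" for l
    unfolding w_def by (metis minus_divide_left mult_minus_right power_divide power_mult_distrib)
  have summand: "coeff l * (vseq x z l / (1 + q * x) ^ l)
                = - (of_nat ((k - 1) choose (l - 1)) / of_nat l * (- p) ^ (k - l) * w ^ l)"
    if "l \<in> {1..k}" for l
    using that by (simp add: coeff_def vseq_def w_power field_simps)
  have "(\<lambda>n. transfer_entry p q s k n * vseq x z n)
          sums (\<Sum>l = 1..k. coeff l * (vseq x z l / (1 + q * x) ^ l))"
    unfolding expand using tail(2) by (intro sums_sum sums_mult) auto
  also have "(\<Sum>l = 1..k. coeff l * (vseq x z l / (1 + q * x) ^ l))
               = - (\<Sum>l = 1..k. of_nat ((k - 1) choose (l - 1)) / of_nat l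
                      * (- p) ^ (k - l) * w ^ l)"
    unfolding sum_negf[symmetric] by (rule sum.cong[OF refl summand])
  also have "\<dots> = - (((- p + w) ^ k - (- p) ^ k) / of_nat k)"
    by (simp only: sum_pred_choose_power_div[OF \<open>0 < k\<close>])
  also have "\<dots> = vseq (p + s * x / (1 + q * x)) c k - vseq p c0 k"
    using \<open>0 < k\<close> by (simp add: vseq_def w_def diff_divide_distrib)
  finally show "(\<lambda>n. transfer_entry p q s k n * vseq x z n)
                  sums (vseq (p + s * x / (1 + q * x)) c k - vseq p c0 k)" .
qed

lemma transfer_entry_0_vseq_sums:
  fixes p q s x z :: complex
  assumes qx: "norm (q * x) < 1"
  shows "summable (\<lambda>n. norm (transfer_entry p q s 0 n * vseq x z n))"
    and "(\<lambda>n. transfer_entry p q s 0 n * vseq x z n) sums Ln (1 + q * x)"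
proof -
  have entry: "transfer_entry p q s 0 n * vseq x z n = - ((- (q * x)) ^ n) / of_nat n" for n
    by (simp add: transfer_entry_def vseq_def flip: power_mult_distrib)
  show "(\<lambda>n. transfer_entry p q s 0 n * vseq x z n) sums Ln (1 + q * x)"
    unfolding entry using qx by (rule Ln_series')
  have bound: "norm (y / of_nat n) \<le> norm y" for y :: complex and n
    by (cases n) (simp_all add: norm_divide divide_le_eq mult_le_cancel_left1 del: of_nat_Suc)
  have "norm (norm (- ((- (q * x)) ^ n) / of_nat n)) \<le> norm (q * x) ^ n" for n
    using bound[of "- ((- (q * x)) ^ n)" n] by (simp add: norm_power)
  moreover have "summable (\<lambda>n. norm (q * x) ^ n)"
    using qx by (simp add: summable_geometric)
  ultimately show "summable (\<lambda>n. norm (transfer_entry p q s 0 n * vseq x z n))"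
    unfolding entry by (blast intro: summable_comparison_test')
qed

lemma transfer_entry_vseq_series:
  fixes p q s x z c :: complex
  assumes "norm (q * x) < 1"
  shows "summable (\<lambda>n. norm (transfer_entry p q s k n * vseq x z n))
       \<and> (\<Sum>n. transfer_entry p q s k n * vseq x z n)
           = vseq (p + s * x / (1 + q * x)) (c + Ln (1 + q * x)) k - vseq p c k"
proof (cases "k = 0")
  case True
  note series = transfer_entry_0_vseq_sums[OF assms, of p s z]
  have "vseq (p + s * x / (1 + q * x)) (c + Ln (1 + q * x)) k - vseq p c k = Ln (1 + q * x)"
    using True by (simp add: vseq_def)
  then show ?thesis
    using conjI[OF series(1) sums_unique[OF series(2), symmetric]] True by simp
next
  case False
  then have "0 < k" by simp
  note series = transfer_entry_vseq_sums[OF assms this]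
  show ?thesis
    using conjI[OF series(1) sums_unique[OF series(2), symmetric]] .
qed

lemma mob_0: "mob A B C D 0 = of_real B / of_real D"
  by (simp add: mob_def)

lemma mobT_0: "mobT A B C D 0 = of_real C / of_real D"
  by (simp add: mobT_def mob_def)

lemma deriv_mob_0:
  assumes "D \<noteq> 0"
  shows "deriv (mob A B C D) 0 = of_real ((A * D - B * C) / D\<^sup>2)"
proof -
  have "(mob A B C D has_field_derivative of_real ((A * D - B * C) / D\<^sup>2)) (at 0)"
    unfolding mob_def[abs_def] using assms
    by (auto intro!: derivative_eq_intros simp: field_simps power2_eq_square)
  then show ?thesis
    by (rule DERIV_imp_deriv)
qed

lemma mob_expansion_at_0:
  assumes D: "D \<noteq> 0" and nz: "1 + mobT A B C D 0 * x \<noteq> 0"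
  shows "mob A B C D x = mob A B C D 0 + deriv (mob A B C D) 0 * x / (1 + mobT A B C D 0 * x)"
proof -
  define E where "E = of_real C * x + of_real D"
  have E_eq: "1 + mobT A B C D 0 * x = E / of_real D"
    using D by (simp add: E_def mobT_0 field_simps)
  with nz have "E \<noteq> 0" by auto
  have "mob A B C D 0 + deriv (mob A B C D) 0 * x / (1 + mobT A B C D 0 * x)
          = (of_real B * E + of_real (A * D - B * C) * x) / (of_real D * E)"
    unfolding E_eq mob_0 deriv_mob_0[OF D]
    using D \<open>E \<noteq> 0\<close> by (simp add: field_simps power2_eq_square)
  also have "\<dots> = of_real D * (of_real A * x + of_real B) / (of_real D * E)"
    by (simp add: E_def algebra_simps)
  also have "\<dots> = mob A B C D x"
    using D by (simp add: mob_def E_def)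
  finally show ?thesis ..
qed

lemma Ln_affine:
  fixes G x :: complex
  assumes "0 < D" and "1 + G / of_real D * x \<noteq> 0"
  shows "Ln (G * x + of_real D) = Ln (of_real D) + Ln (1 + G / of_real D * x)"
proof -
  have "G * x + of_real D = of_real D * (1 + G / of_real D * x)"
    using assms(1) by (simp add: field_simps)
  with assms show ?thesis
    by (simp add: Ln_times_of_real Ln_of_real)
qed

theorem lemma3p9:
  fixes a b c d :: real and x z :: complex
  assumes pos: "a > 0" "b > 0" "c > 0" "d > 0"
    and inv: "a * d - b * c \<noteq> 0"
    and rho: "\<exists>\<rho>::real. 0 < \<rho> \<and> \<rho> < 1 \<and>
               (\<forall>t::real. \<bar>t\<bar> \<le> 1 \<longrightarrow>
                  fr a b c d (of_real t) \<in> \<real> \<and> \<bar>Re (fr a b c d (of_real t))\<bar> \<le> \<rho>)"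
    and transp: "\<forall>t::real. \<bar>t\<bar> \<le> 1 \<longrightarrow>
                  frT a b c d (of_real t) \<in> \<real> \<and> \<bar>Re (frT a b c d (of_real t))\<bar> < 1"
    and dpos: "delt a b c d > 0"
    and gd: "\<bar>gam a b c d / delt a b c d\<bar> < 1"
    and x: "cmod x \<le> 1"
  shows "\<forall>k. summable (\<lambda>n. norm (Tent a b c d k n * vseq x z n)) \<and>
             (\<Sum>n. Tent a b c d k n * vseq x z n) =
               vseq (fr a b c d x) (lr a b c d x) k - vseq (fr a b c d 0) (lr a b c d 0) k"
proof -
  define p q s where "p = fr a b c d 0" and "q = frT a b c d 0" and "s = deriv (fr a b c d) 0"
  have q: "q = of_real (gam a b c d) / of_real (delt a b c d)"
    by (simp add: q_def frT_def mobT_0)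
  have qx: "norm (q * x) < 1"
  proof -
    have "norm (q * x) \<le> norm q"
      using x by (simp add: norm_mult mult_left_le)
    also have "norm q < 1"
      using gd by (simp add: q norm_divide)
    finally show ?thesis .
  qed
  then have nz: "1 + q * x \<noteq> 0"
    by (metis add_eq_0_iff norm_minus_cancel norm_one order.irrefl)
  have fx: "fr a b c d x = p + s * x / (1 + q * x)"
    using dpos nz unfolding p_def q_def s_def fr_def frT_def
    by (intro mob_expansion_at_0) simp_all
  have lx: "lr a b c d x = lr a b c d 0 + Ln (1 + q * x)"
    using Ln_affine[OF dpos] nz by (simp add: lr_def q)
  show ?thesis
    using transfer_entry_vseq_series[OF qx, where c = "lr a b c d 0"]
    unfolding Tent_eq_transfer_entry fx lx p_def q_def s_def by blast
qed

end
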